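(* Let $d$ be a positive integer and let $\omega_N\subset\mathbb{S}^{d-1}$ be a set of $N$ distinct points. Assume that for any three distinct points $x,y,z\in\omega_N$, $$\langle x,y\rangle\langle x,z\rangle\langle y,z\rangle<0.$$ Then $N\le d+1$.
   Context: $\langle\cdot,\cdot\rangle$ is the Euclidean inner product and $\mathbb{S}^{d-1}$ is the unit sphere in $\mathbb{R}^d$. *)

theory Defs
  imports "HOL-Analysis.Analysis"
begin

end

(* Fix w0 in W and replace every other point x by +x or -x so that its inner product with w0
   becomes negative; the triple condition then makes all pairwise inner products of the switched
   vectors negative.  In a pairwise obtuse family, any vector can be removed to leave a linearly
   independent set: a linear relation splits into a positive and a negative part with a common
   value u satisfying u . u <= 0, so u = 0, and pairing u with the removed vector forces both
   parts to be empty. *)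

theory Submission
  imports Defs
begin

lemma nonneg_combinations_eq_imp_zero:
  fixes a b :: "'a::real_inner \<Rightarrow> real"
  assumes "finite P" "finite Q"
    and "\<And>p. p \<in> P \<Longrightarrow> a p \<ge> 0" "\<And>q. q \<in> Q \<Longrightarrow> b q \<ge> 0"
    and obtuse: "\<And>p q. p \<in> P \<Longrightarrow> q \<in> Q \<Longrightarrow> p \<bullet> q \<le> 0"
    and eq: "(\<Sum>p\<in>P. a p *\<^sub>R p) = (\<Sum>q\<in>Q. b q *\<^sub>R q)"
  shows "(\<Sum>p\<in>P. a p *\<^sub>R p) = 0"
proof -
  define u where "u = (\<Sum>p\<in>P. a p *\<^sub>R p)"
  have "u \<bullet> u = (\<Sum>p\<in>P. a p *\<^sub>R p) \<bullet> (\<Sum>q\<in>Q. b q *\<^sub>R q)"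
    using eq by (simp add: u_def)
  also have "\<dots> = (\<Sum>p\<in>P. \<Sum>q\<in>Q. a p * b q * (p \<bullet> q))"
    by (simp add: inner_sum_left inner_sum_right sum_distrib_left)
      (subst sum.swap, simp add: mult.assoc mult.left_commute)
  also have "\<dots> \<le> 0"
    using assms by (intro sum_nonpos) (simp add: mult_nonneg_nonpos)
  finally have "u = 0"
    by (metis inner_gt_zero_iff not_le)
  then show ?thesis
    by (simp add: u_def)
qed

lemma positive_combination_in_open_halfspace_nonzero:
  fixes a :: "'a::real_inner \<Rightarrow> real"
  assumes "finite P" "P \<noteq> {}"
    and "\<And>p. p \<in> P \<Longrightarrow> a p > 0" "\<And>p. p \<in> P \<Longrightarrow> k \<bullet> p < 0"
  shows "(\<Sum>p\<in>P. a p *\<^sub>R p) \<noteq> 0"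
proof
  assume zero: "(\<Sum>p\<in>P. a p *\<^sub>R p) = 0"
  have "0 < (\<Sum>p\<in>P. a p * - (k \<bullet> p))"
    using assms by (intro sum_pos) (auto simp: mult_pos_neg)
  also have "\<dots> = - (k \<bullet> (\<Sum>p\<in>P. a p *\<^sub>R p))"
    by (simp add: inner_sum_right sum_negf)
  finally show False
    using zero by simp
qed

lemma pairwise_obtuse_remove_independent:
  fixes V :: "'a::real_inner set"
  assumes obtuse: "pairwise (\<lambda>x y. x \<bullet> y < 0) V" and "k \<in> V"
  shows "independent (V - {k})"
  unfolding independent_explicit_finite_subsets
proof (intro allI impI ballI)
  fix S c v
  assume S: "S \<subseteq> V - {k}" "finite S" and dep: "(\<Sum>v\<in>S. c v *\<^sub>R v) = 0" and "v \<in> S"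
  define P where "P = {v \<in> S. c v > 0}"
  define Q where "Q = {v \<in> S. c v < 0}"
  have PQ: "P \<subseteq> S" "Q \<subseteq> S" "finite P" "finite Q" "P \<inter> Q = {}"
    using S by (auto simp: P_def Q_def)
  have cP: "c p > 0" if "p \<in> P" for p
    using that by (simp add: P_def)
  have cQ: "- c q > 0" if "q \<in> Q" for q
    using that by (simp add: Q_def)
  have "(\<Sum>v\<in>S. c v *\<^sub>R v) = (\<Sum>v\<in>P \<union> Q. c v *\<^sub>R v)"
    using S by (intro sum.mono_neutral_right) (auto simp: P_def Q_def)
  also have "\<dots> = (\<Sum>p\<in>P. c p *\<^sub>R p) - (\<Sum>q\<in>Q. (- c q) *\<^sub>R q)"
    using PQ by (simp add: sum.union_disjoint sum_negf)
  finally have eq: "(\<Sum>p\<in>P. c p *\<^sub>R p) = (\<Sum>q\<in>Q. (- c q) *\<^sub>R q)"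
    using dep by simp
  have "S \<subseteq> V" "k \<notin> S"
    using S by auto
  then have halfspace: "k \<bullet> p < 0" if "p \<in> S" for p
    using pairwiseD[OF obtuse \<open>k \<in> V\<close>] that by fastforce
  have obtuse_PQ: "p \<bullet> q \<le> 0" if "p \<in> P" "q \<in> Q" for p q
  proof -
    have "p \<noteq> q"
      using cP cQ that by fastforce
    then show ?thesis
      using pairwiseD[OF obtuse] PQ \<open>S \<subseteq> V\<close> that by fastforce
  qed
  have P0: "(\<Sum>p\<in>P. c p *\<^sub>R p) = 0"
    using PQ cP cQ obtuse_PQ eq
    by (intro nonneg_combinations_eq_imp_zero[of P Q c "\<lambda>q. - c q"]) (auto intro: less_imp_le)
  with eq have Q0: "(\<Sum>q\<in>Q. (- c q) *\<^sub>R q) = 0"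
    by simp
  have "P = {}"
    using positive_combination_in_open_halfspace_nonzero[of P c k] PQ cP halfspace P0 by blast
  moreover have "Q = {}"
    using positive_combination_in_open_halfspace_nonzero[of Q "\<lambda>q. - c q" k] PQ cQ halfspace Q0
    by blast
  ultimately have "\<not> c v > 0" "\<not> c v < 0"
    using \<open>v \<in> S\<close> by (auto simp: P_def Q_def)
  then show "c v = 0"
    by linarith
qed

lemma card_pairwise_obtuse_le:
  fixes V :: "'a::euclidean_space set"
  assumes "pairwise (\<lambda>x y. x \<bullet> y < 0) V"
  shows "card V \<le> DIM('a) + 1"
proof (cases "V = {}")
  case False
  then obtain k where "k \<in> V"
    by blast
  then have "finite (V - {k}) \<and> card (V - {k}) \<le> DIM('a)"
    using assms by (intro independent_bound pairwise_obtuse_remove_independent)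
  then show ?thesis
    using \<open>k \<in> V\<close> card_gt_0_iff[of V] by (auto simp: card_Diff_singleton_if)
qed simp

lemma card_pairwise_obtuse_family_le:
  fixes v :: "'b \<Rightarrow> 'a::euclidean_space"
  assumes obtuse: "pairwise (\<lambda>i j. v i \<bullet> v j < 0) I"
  shows "card I \<le> DIM('a) + 1"
proof -
  have "inj_on v I"
  proof (rule inj_onI, rule ccontr)
    fix i j
    assume "i \<in> I" "j \<in> I" "v i = v j" "i \<noteq> j"
    then have "v i \<bullet> v i < 0"
      using obtuse by (auto simp: pairwise_def)
    then show False
      using inner_ge_zero[of "v i"] by linarith
  qed
  moreover have "pairwise (\<lambda>x y. x \<bullet> y < 0) (v ` I)"
    using obtuse by (auto simp: pairwise_def)
  ultimately show ?thesis
    by (metis card_image card_pairwise_obtuse_le)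
qed

definition sign_switch :: "'a::real_inner \<Rightarrow> 'a \<Rightarrow> 'a" where
  "sign_switch w0 x = (if x = w0 then x else - sgn (w0 \<bullet> x) *\<^sub>R x)"

lemma pairwise_obtuse_sign_switch:
  fixes W :: "'a::real_inner set"
  assumes nonzero: "\<And>x. x \<in> W \<Longrightarrow> x \<noteq> w0 \<Longrightarrow> w0 \<bullet> x \<noteq> 0"
    and triple: "\<And>x y. x \<in> W \<Longrightarrow> y \<in> W \<Longrightarrow> x \<noteq> y \<Longrightarrow> x \<noteq> w0 \<Longrightarrow> y \<noteq> w0
      \<Longrightarrow> (w0 \<bullet> x) * (w0 \<bullet> y) * (x \<bullet> y) < 0"
  shows "pairwise (\<lambda>x y. sign_switch w0 x \<bullet> sign_switch w0 y < 0) W"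
proof (rule pairwiseI)
  fix x y
  assume "x \<in> W" "y \<in> W" "x \<noteq> y"
  then consider "x = w0" | "y = w0" | "x \<noteq> w0" "y \<noteq> w0"
    by blast
  then show "sign_switch w0 x \<bullet> sign_switch w0 y < 0"
  proof cases
    case 1
    then show ?thesis
      using nonzero[of y] \<open>y \<in> W\<close> \<open>x \<noteq> y\<close> by (auto simp: sign_switch_def sgn_if)
  next
    case 2
    then show ?thesis
      using nonzero[of x] \<open>x \<in> W\<close> \<open>x \<noteq> y\<close> by (auto simp: sign_switch_def sgn_if inner_commute)
  next
    case 3
    then show ?thesis
      using triple[of x y] \<open>x \<in> W\<close> \<open>y \<in> W\<close> \<open>x \<noteq> y\<close>
      by (auto simp: sign_switch_def sgn_if mult_less_0_iff zero_less_mult_iff)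
  qed
qed

theorem theorem3p3:
  fixes W :: "'a::euclidean_space set"
  assumes "finite W"
    and "W \<subseteq> sphere 0 1"
    and "\<And>x y z. x \<in> W \<Longrightarrow> y \<in> W \<Longrightarrow> z \<in> W \<Longrightarrow> x \<noteq> y \<Longrightarrow> x \<noteq> z \<Longrightarrow> y \<noteq> z
           \<Longrightarrow> (x \<bullet> y) * (x \<bullet> z) * (y \<bullet> z) < 0"
  shows "card W \<le> DIM('a) + 1"
proof (cases "card W \<le> 2")
  case True
  then show ?thesis
    using DIM_positive[where 'a = 'a] by linarith
next
  case False
  have nonzero: "x \<bullet> y \<noteq> 0" if "x \<in> W" "y \<in> W" "x \<noteq> y" for x y
  proof -
    have "card (W - {x, y}) \<noteq> 0"
      using False that \<open>finite W\<close> by (simp add: card_Diff_subset)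
    then obtain z where "z \<in> W - {x, y}"
      by (metis card.empty ex_in_conv)
    then show ?thesis
      using assms(3)[of x y z] that by auto
  qed
  from False obtain w0 where "w0 \<in> W"
    by fastforce
  have "pairwise (\<lambda>x y. sign_switch w0 x \<bullet> sign_switch w0 y < 0) W"
    using nonzero \<open>w0 \<in> W\<close> assms(3) by (intro pairwise_obtuse_sign_switch) auto
  then show ?thesis
    by (rule card_pairwise_obtuse_family_le)
qed

end
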